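(* Let $\mathbf{V}\in\mathbb{R}^{N\times N}$ and $\mathbf{A}\in\mathbb{R}^{T\times N}$ satisfy $\mathbf{1}_N^\top\mathbf{V}=\mathbf{1}_N^\top$, $\mathbf{1}_T^\top\mathbf{A}=\mathbf{1}_N^\top$, $\mathbf{V}\boldsymbol\mu=\boldsymbol\mu$. Then $$\mathbb{E}\hat\nabla_{\mathbf{A}}l=K_P\alpha_V(\alpha_V\alpha_A-1)\Big(\mathbf{Q}-\frac{\mathbf{1}_T\mathbf{1}_N^\top}{T}\Big)+K_P\alpha_V^2\boldsymbol\Delta_A+\|\boldsymbol\Delta_V\|_\mu^2\Big(\mathbf{A}-\frac{\mathbf{1}_T\mathbf{1}_N^\top}{T}\Big),$$ $$\mathbb{E}\hat\nabla_{\mathbf{V}}l=\alpha_AK_Q(\alpha_A\alpha_V-1)(\mathbf{P}-\boldsymbol\mu\mathbf{1}^\top)+\frac{\alpha_V-1}{T}(\mathbf{P}-\boldsymbol\mu\mathbf{1}^\top)+\Big(\alpha_A^2K_Q+\frac1T\Big)\boldsymbol\Delta_V+\|\boldsymbol\Delta_A\|_\mu^2(\mathbf{V}-\boldsymbol\mu\mathbf{1}^\top).$$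
   Context: $\boldsymbol\mu\in\mathbb{R}^N$ is a probability vector with positive entries; $\mathbf{P}\in\mathbb{R}^{N\times N}$ has nonnegative entries, columns summing to $1$, $\mathbf{P}\boldsymbol\mu=\boldsymbol\mu$; $\mathbf{Q}=(\mathbf{q}^{(1)},\dots,\mathbf{q}^{(N)})\in\mathbb{R}^{T\times N}$ has probability-vector columns. Data: $x_1,\dots,x_{T+1}$ i.i.d. with law $\boldsymbol\mu$, $x_o$ with $\Pr(x_o=n\mid x_{T+1}=k,x_1,\dots,x_T)=\sum_tq^{(k)}_tP_{n,x_t}$; $\mathbf{X}=(\mathbf{e}_{x_1},\dots,\mathbf{e}_{x_T})$; loss $l=\frac12\|\mathbf{e}_{x_o}-\mathbf{V}\mathbf{X}\mathbf{A}\mathbf{e}_{x_{T+1}}\|^2$; $\mathbf{a}^{(k)}$ the columns of $\mathbf{A}$. Preconditioned gradients: $\hat\nabla_{\mathbf{V}}l=(\mathbf{I}_N-\mathbf{1}\mathbf{1}^\top/N)(\nabla_{\mathbf{V}}l)\operatorname{diag}(1/\boldsymbol\mu)(\mathbf{I}_N-\boldsymbol\mu\boldsymbol\mu^\top/\|\boldsymbol\mu\|^2)$; $\hat\nabla_{\mathbf{A}}l$ is the $T\times N$ matrix with columns $\frac1{\mu_k}(\mathbf{I}_T-\mathbf{1}\mathbf{1}^\top/T)\nabla_{\mathbf{a}^{(k)}}l$. $\mathbb{E}$ is expectation over data with parameters fixed. $\langle\mathbf{M},\mathbf{M}'\rangle_\mu=\operatorname{Tr}(\mathbf{M}\operatorname{diag}(\boldsymbol\mu)\mathbf{M}'^\top)$,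 $\|\mathbf{M}\|_\mu^2=\langle\mathbf{M},\mathbf{M}\rangle_\mu$. $K_P=\|\mathbf{P}\|_\mu^2-\|\boldsymbol\mu\|^2>0$, $K_Q=\|\mathbf{Q}\|_\mu^2-1/T>0$, $\alpha_V=(\langle\mathbf{V},\mathbf{P}\rangle_\mu-\|\boldsymbol\mu\|^2)/K_P$, $\alpha_A=(\langle\mathbf{A},\mathbf{Q}\rangle_\mu-1/T)/K_Q$, $\boldsymbol\Delta_V=\mathbf{V}-\alpha_V\mathbf{P}-(1-\alpha_V)\boldsymbol\mu\mathbf{1}^\top$, $\boldsymbol\Delta_A=\mathbf{A}-\alpha_A\mathbf{Q}-(1-\alpha_A)\mathbf{1}\mathbf{1}^\top/T$. *)

theory Defs
  imports "HOL-Analysis.Analysis"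
begin

text \<open>Index type 'n has N = CARD('n) elements, index type 't has
T = CARD('t) elements. A matrix M in R^{m x n} is a value of type real^'n^'m with
entry M_{ij} = M$i$j. Thus mu :: real^'n, P,V :: real^'n^'n, Q,A :: real^'n^'t
(Q$t$k = q^(k)_t, column k of A is a^(k)).\<close>

definition diag_vec :: "real^'n \<Rightarrow> real^'n^'n" where
  "diag_vec v = (\<chi> i j. if i = j then v$i else 0)"

definition const_mat :: "real \<Rightarrow> real^'n^'m" where
  "const_mat c = (\<chi> i j. c)"

definition mu_ones :: "real^'n \<Rightarrow> real^'n^'n" where
  "mu_ones mu = (\<chi> i j. mu$i)"

definition outer :: "real^'n \<Rightarrow> real^'n \<Rightarrow> real^'n^'n" where
  "outer u v = (\<chi> i j. u$i * v$j)"

definition mu_inner :: "real^'n \<Rightarrow> real^'n^'m \<Rightarrow> real^'n^'m \<Rightarrow> real" where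
  "mu_inner mu M M' = trace (M ** diag_vec mu ** transpose M')"

definition mu_norm2 :: "real^'n \<Rightarrow> real^'n^'m \<Rightarrow> real" where
  "mu_norm2 mu M = mu_inner mu M M"

definition grad :: "('a::real_inner \<Rightarrow> real) \<Rightarrow> 'a \<Rightarrow> 'a" where
  "grad f x = (THE g. (f has_derivative (\<lambda>h. g \<bullet> h)) (at x))"

definition Xmat :: "('t \<Rightarrow> 'n) \<Rightarrow> real^'t^'n" where
  "Xmat xs = (\<chi> i t. if xs t = i then 1 else 0)"

text \<open>loss l = 1/2 ||e_{x_o} - V X A e_{x_{T+1}}||^2 ; k = x_{T+1}, xo = x_o\<close>
definition loss :: "real^'n^'n \<Rightarrow> real^'n^'t \<Rightarrow> ('t \<Rightarrow> 'n) \<Rightarrow> 'n \<Rightarrow> 'n \<Rightarrow> real" where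
  "loss V A xs k xo = 1/2 * (norm (axis xo 1 - V *v (Xmat xs *v column k A)))^2"

definition upd_col :: "real^'n^'t \<Rightarrow> 'n \<Rightarrow> real^'t \<Rightarrow> real^'n^'t" where
  "upd_col A j a = (\<chi> t i. if i = j then a$t else A$t$i)"

definition pgrad_V :: "real^'n \<Rightarrow> real^'n^'n \<Rightarrow> real^'n^'t \<Rightarrow> ('t \<Rightarrow> 'n) \<Rightarrow> 'n \<Rightarrow> 'n \<Rightarrow> real^'n^'n" where
  "pgrad_V mu V A xs k xo =
     (mat 1 - const_mat (1 / real CARD('n))) ** grad (\<lambda>V'. loss V' A xs k xo) V
       ** diag_vec (\<chi> i. 1 / mu$i) ** (mat 1 - (1 / (norm mu)^2) *\<^sub>R outer mu mu)"

definition pgrad_A :: "real^'n \<Rightarrow> real^'n^'n \<Rightarrow> real^'n^'t \<Rightarrow> ('t \<Rightarrow> 'n) \<Rightarrow> 'n \<Rightarrow> 'n \<Rightarrow> real^'n^'t" where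
  "pgrad_A mu V A xs k xo =
     (\<chi> t j. (1 / mu$j) * (((mat 1 - const_mat (1 / real CARD('t)) :: real^'t^'t)
        *v grad (\<lambda>a. loss V (upd_col A j a) xs k xo) (column j A)) $ t))"

text \<open>Expectation over x_1..x_T, x_{T+1} iid mu and x_o with
  Pr(x_o = n | x_{T+1}=k, x_1..x_T) = sum_t q^(k)_t P_{n,x_t}.\<close>
definition expect :: "real^'n \<Rightarrow> real^'n^'n \<Rightarrow> real^'n^'t \<Rightarrow>
     (('t \<Rightarrow> 'n) \<Rightarrow> 'n \<Rightarrow> 'n \<Rightarrow> 'b::real_vector) \<Rightarrow> 'b" where
  "expect mu P Q f = (\<Sum>xs\<in>UNIV. \<Sum>k\<in>UNIV. \<Sum>xo\<in>UNIV.
      ((\<Prod>t\<in>UNIV. mu$(xs t)) * mu$k * (\<Sum>t\<in>UNIV. Q$t$k * P$xo$(xs t))) *\<^sub>R f xs k xo)"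

end

theory Submission
  imports Defs
begin

(* Given x_1, ..., x_T and x_{T+1} = k, both loss gradients are affine in the one-hot target e_{x_o},
   whose conditional mean is P X q^(k); so averaging over x_o replaces e_{x_o} by P X q^(k). What remains
   are second moments of the one-hot matrix X over the i.i.d. tokens, E[X u w^T X^T] and E[X^T B X u].
   Each of their entries is a sum of terms E f(x_s, x_r), equal to E f(x, x) for s = r and to E f(x, y)
   with x, y independent for s <> r. With P mu = V mu = mu and unit column sums this gives
     E grad_V l = (||A||_mu^2 (V - mu 1^T) - <A,Q>_mu (P - mu 1^T)) diag(mu),
     E grad_{a^(j)} l = mu_j ((||V||_mu^2 - ||mu||^2) a^(j) - (<V,P>_mu - ||mu||^2) q^(j)).
   The preconditioners cancel diag(mu) and fix these matrices (zero column sums, mu in the kernel).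
   Centring subtracts exactly ||mu||^2 resp. 1/T from the mu-inner products, so the stated forms follow
   by expanding Delta_V = (V - mu 1^T) - alpha_V (P - mu 1^T) and Delta_A = (A - 1 1^T/T) - alpha_A (Q - 1 1^T/T)
   bilinearly. *)

section \<open>Matrix identities\<close>

lemma matrix_add_rdistrib: "(A + B) ** C = A ** C + B ** (C :: 'a::semiring_1^'p^'n)"
  by (vector matrix_matrix_mult_def sum.distrib[symmetric] field_simps)

lemma matrix_diff_rdistrib: "(A - B) ** C = A ** C - B ** (C :: 'a::ring_1^'p^'n)"
  by (vector matrix_matrix_mult_def sum_subtractf[symmetric] field_simps)

lemma matrix_diff_ldistrib: "A ** (B - C) = A ** B - A ** (C :: 'a::ring_1^'p^'n)"
  by (vector matrix_matrix_mult_def sum_subtractf[symmetric] field_simps)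

lemma linear_matrix_sandwich: "linear (\<lambda>G::real^'n::finite^'m::finite. A ** G ** B)"
  by (rule linearI)
    (simp_all add: matrix_add_ldistrib matrix_add_rdistrib matrix_scalar_ac scalar_matrix_assoc[symmetric])

lemma matrix_mult_diag_vec_component: "(M ** diag_vec v) $ i $ j = M$i$j * v$j"
  by (simp add: matrix_matrix_mult_def diag_vec_def if_distrib[of "\<lambda>c. _ * c"] cong: if_cong)

lemma diag_vec_mult_inverse:
  assumes "\<forall>i. v$i \<noteq> 0"
  shows "diag_vec v ** diag_vec (\<chi> i. 1 / v$i) = mat 1"
  unfolding vec_eq_iff matrix_mult_diag_vec_component using assms by (simp add: diag_vec_def mat_def)

lemma matrix_mult_outer: "Y ** outer u w = outer (Y *v u) (w :: real^'n::finite)"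
  by (simp add: vec_eq_iff matrix_matrix_mult_def outer_def matrix_vector_mult_def sum_distrib_left mult_ac)

lemma matrix_mult_rank_one_update:
  fixes Y :: "real^'n::finite^'n" and u w :: "real^'n"
  assumes "Y *v u = 0"
  shows "Y ** (mat 1 - c *\<^sub>R outer u w) = Y"
proof -
  have "Y ** (mat 1 - c *\<^sub>R outer u w) = Y - outer (c *\<^sub>R Y *v u) w"
    by (simp only: matrix_diff_ldistrib matrix_mul_rid matrix_scalar_ac matrix_mult_outer)
  then show ?thesis
    using assms by (simp add: scaleR_matrix_vector_assoc[symmetric] outer_def vec_eq_iff)
qed

lemma centering_matrix_mult:
  assumes "\<forall>j. (\<Sum>i\<in>UNIV. Y$i$j) = 0"
  shows "(mat 1 - const_mat c) ** Y = Y"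
proof -
  have "const_mat c ** Y = 0"
    using assms by (simp add: vec_eq_iff matrix_matrix_mult_def const_mat_def sum_distrib_left[symmetric])
  then show ?thesis
    by (simp add: matrix_diff_rdistrib)
qed

lemma centering_matrix_mult_vec: "(mat 1 - const_mat c) *v v = v - (c * (\<Sum>i\<in>UNIV. v$i)) *\<^sub>R 1"
proof -
  have "(mat 1 - const_mat c) *v v = v - const_mat c *v v"
    by (simp add: matrix_vector_mult_diff_rdistrib)
  then show ?thesis
    by (simp add: vec_eq_iff matrix_vector_mult_def const_mat_def sum_distrib_left)
qed

lemma mu_ones_mult_vec: "mu_ones mu *v v = (\<Sum>i\<in>UNIV. v$i) *\<^sub>R mu"
  by (simp add: vec_eq_iff mu_ones_def matrix_vector_mult_def sum_distrib_left mult.commute)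

lemma inner_transpose_matrix_vector_mult: "x \<bullet> (transpose M *v y) = (M *v x) \<bullet> (y :: real^'n::finite)"
  by (metis dot_lmul_matrix inner_commute transpose_matrix_vector)

lemma inner_matrix_vector_mult: "r \<bullet> (H *v y) = outer r y \<bullet> (H :: real^'n::finite^'n)"
  by (simp add: inner_vec_def outer_def matrix_vector_mult_def sum_distrib_left mult_ac)

lemma linear_outer_left: "linear (\<lambda>r. outer r y)"
  by (rule linearI) (simp_all add: outer_def vec_eq_iff algebra_simps)

lemma bounded_linear_matrix_vector_mult_left:
  "bounded_linear (\<lambda>M::real^'n::finite^'m::finite. M *v y)"
  unfolding linear_conv_bounded_linear[symmetric]
  by (rule linearI) (simp_all add: matrix_vector_mult_add_rdistrib scaleR_matrix_vector_assoc)


section \<open>The mu-weighted inner product\<close>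

lemma mu_inner_sum: "mu_inner mu M M' = (\<Sum>i\<in>UNIV. \<Sum>j\<in>UNIV. M$i$j * mu$j * M'$i$j)"
  by (simp add: mu_inner_def trace_def matrix_matrix_mult_def[of "M ** diag_vec mu"]
      matrix_mult_diag_vec_component transpose_def)

lemma mu_inner_commute: "mu_inner mu M M' = mu_inner mu M' M"
  unfolding mu_inner_sum by (simp add: mult_ac)

lemma mu_inner_diff_left: "mu_inner mu (M - N) M' = mu_inner mu M M' - mu_inner mu N M'"
  unfolding mu_inner_sum by (simp add: algebra_simps sum_subtractf)

lemma mu_inner_diff_right: "mu_inner mu M (M' - N) = mu_inner mu M M' - mu_inner mu M N"
  unfolding mu_inner_sum by (simp add: algebra_simps sum_subtractf)

lemma mu_inner_scaleR_left: "mu_inner mu (c *\<^sub>R M) M' = c * mu_inner mu M M'"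
  unfolding mu_inner_sum by (simp add: sum_distrib_left mult_ac)

lemma mu_norm2_diff_scaleR:
  "mu_norm2 mu (M - a *\<^sub>R N) = mu_norm2 mu M - 2 * a * mu_inner mu M N + a^2 * mu_norm2 mu N"
  by (simp add: mu_norm2_def mu_inner_diff_left mu_inner_diff_right mu_inner_scaleR_left
      mu_inner_commute[of mu N M] mu_inner_commute[of mu _ "a *\<^sub>R N"] power2_eq_square algebra_simps)

lemma mu_inner_columns: "mu_inner mu M M' = (\<Sum>k\<in>UNIV. mu$k * (column k M \<bullet> column k M'))"
  unfolding mu_inner_sum
  by (subst sum.swap) (simp add: inner_vec_def column_def sum_distrib_left mult_ac)

lemma mu_inner_transpose_mult_diag: "(\<Sum>x\<in>UNIV. mu$x * (transpose M ** M')$x$x) = mu_inner mu M M'"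
  by (simp add: mu_inner_columns matrix_matrix_mult_def transpose_def column_def inner_vec_def)

lemma mu_inner_mu_ones: "mu_inner mu M (mu_ones mu) = mu \<bullet> (M *v mu)"
  by (simp add: mu_inner_sum mu_ones_def inner_vec_def matrix_vector_mult_def sum_distrib_left mult_ac)

lemma mu_inner_const_mat:
  assumes "\<forall>j. (\<Sum>i\<in>UNIV. M$i$j) = 1" and "(\<Sum>j\<in>UNIV. mu$j) = 1"
  shows "mu_inner mu M (const_mat c) = c"
proof -
  have "mu_inner mu M (const_mat c) = c * (\<Sum>j\<in>UNIV. (\<Sum>i\<in>UNIV. M$i$j) * mu$j)"
    unfolding mu_inner_sum const_mat_def
    by (subst sum.swap) (simp add: sum_distrib_left sum_distrib_right mult_ac)
  then show ?thesis using assms by simp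
qed

lemma mu_inner_centered:
  assumes "mu_inner mu M B = b" and "mu_inner mu M' B = b" and "mu_inner mu B B = b"
  shows "mu_inner mu (M - B) (M' - B) = mu_inner mu M M' - b"
  using assms by (simp add: mu_inner_diff_left mu_inner_diff_right mu_inner_commute[of mu B M'])

lemma mu_inner_centered_mu_ones:
  fixes mu :: "real^'n::finite" and M M' :: "real^'n^'n"
  assumes "(\<Sum>i\<in>UNIV. mu$i) = 1" and "M *v mu = mu" and "M' *v mu = mu"
  shows "mu_inner mu (M - mu_ones mu) (M' - mu_ones mu) = mu_inner mu M M' - (norm mu)^2"
proof (rule mu_inner_centered)
  have "mu_ones mu *v mu = mu"
    using assms(1) by (simp add: mu_ones_mult_vec)
  then show "mu_inner mu (mu_ones mu) (mu_ones mu) = (norm mu)^2"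
    by (simp add: mu_inner_mu_ones power2_norm_eq_inner)
qed (use assms in \<open>simp_all add: mu_inner_mu_ones power2_norm_eq_inner\<close>)

lemma mu_inner_centered_const_mat:
  fixes mu :: "real^'n::finite" and M M' :: "real^'n^'t::finite"
  assumes "(\<Sum>i\<in>UNIV. mu$i) = 1" and "\<forall>j. (\<Sum>i\<in>UNIV. M$i$j) = 1" and "\<forall>j. (\<Sum>i\<in>UNIV. M'$i$j) = 1"
  shows "mu_inner mu (M - const_mat (1 / real CARD('t))) (M' - const_mat (1 / real CARD('t)))
       = mu_inner mu M M' - 1 / real CARD('t)"
proof -
  have "\<forall>j. (\<Sum>i\<in>UNIV. (const_mat (1 / real CARD('t)) :: real^'n^'t) $ i $ j) = 1"
    by (simp add: const_mat_def)
  then show ?thesis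
    using mu_inner_const_mat[OF assms(2,1)] mu_inner_const_mat[OF assms(3,1)] mu_inner_const_mat[OF _ assms(1)]
    by (intro mu_inner_centered) auto
qed


section \<open>Means over i.i.d. token sequences\<close>

definition iid_mean :: "real^'n \<Rightarrow> (('t::finite \<Rightarrow> 'n::finite) \<Rightarrow> 'b::real_vector) \<Rightarrow> 'b" where
  "iid_mean mu f = (\<Sum>xs\<in>UNIV. (\<Prod>t\<in>UNIV. mu$(xs t)) *\<^sub>R f xs)"

lemma iid_mean_sum: "iid_mean mu (\<lambda>xs. \<Sum>i\<in>I. f i xs) = (\<Sum>i\<in>I. iid_mean mu (f i))"
  unfolding iid_mean_def scaleR_sum_right by (rule sum.swap)

lemma iid_mean_scaleR: "iid_mean mu (\<lambda>xs. c *\<^sub>R f xs) = c *\<^sub>R iid_mean mu f"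
  unfolding iid_mean_def scaleR_sum_right by (simp add: mult.commute)

lemma iid_mean_mult_left: "iid_mean mu (\<lambda>xs. c * f xs) = c * iid_mean mu (f :: _ \<Rightarrow> real)"
  using iid_mean_scaleR[of mu c f] by simp

lemma iid_mean_diff: "iid_mean mu (\<lambda>xs. f xs - g xs) = iid_mean mu f - iid_mean mu g"
  unfolding iid_mean_def by (simp add: scaleR_diff_right sum_subtractf)

lemma iid_mean_component: "iid_mean mu f $ i = iid_mean mu (\<lambda>xs. f xs $ i)"
  unfolding iid_mean_def by simp

lemma iid_mean_prod:
  fixes mu :: "real^'n::finite" and h :: "'t::finite \<Rightarrow> 'n \<Rightarrow> real"
  shows "iid_mean mu (\<lambda>xs. \<Prod>t\<in>UNIV. h t (xs t)) = (\<Prod>t\<in>UNIV. \<Sum>z\<in>UNIV. mu$z * h t z)"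
  using prod_sum_PiE[of "UNIV::'t set" "\<lambda>_. UNIV::'n set" "\<lambda>t z. mu$z * h t z"]
  by (simp add: iid_mean_def prod.distrib)

lemma iid_mean_coordinate:
  fixes mu :: "real^'n::finite" and f :: "'n \<Rightarrow> real" and s :: "'t::finite"
  assumes "(\<Sum>i\<in>UNIV. mu$i) = 1"
  shows "iid_mean mu (\<lambda>xs. f (xs s)) = (\<Sum>x\<in>UNIV. mu$x * f x)"
proof -
  have "iid_mean mu (\<lambda>xs. f (xs s)) = iid_mean mu (\<lambda>xs::'t \<Rightarrow> 'n. \<Prod>t\<in>UNIV. if t = s then f (xs t) else 1)"
    by simp
  also have "\<dots> = (\<Prod>t\<in>UNIV. if t = s then \<Sum>x\<in>UNIV. mu$x * f x else 1)"
    unfolding iid_mean_prod[of mu "\<lambda>t z. if t = s then f z else 1"]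
    by (rule prod.cong) (simp_all add: assms)
  finally show ?thesis by simp
qed

lemma iid_mean_two_coordinates:
  fixes mu :: "real^'n::finite" and f g :: "'n \<Rightarrow> real" and s r :: "'t::finite"
  assumes "(\<Sum>i\<in>UNIV. mu$i) = 1" and "s \<noteq> r"
  shows "iid_mean mu (\<lambda>xs. f (xs s) * g (xs r)) = (\<Sum>x\<in>UNIV. mu$x * f x) * (\<Sum>y\<in>UNIV. mu$y * g y)"
proof -
  have split: "(\<Prod>t\<in>UNIV. if t = s then a t else if t = r then b t else 1) = a s * (b r :: real)" for a b
    using assms(2) by (simp add: prod.If_cases Diff_eq Int_absorb1)
  have "iid_mean mu (\<lambda>xs. f (xs s) * g (xs r))
      = iid_mean mu (\<lambda>xs::'t \<Rightarrow> 'n. \<Prod>t\<in>UNIV. if t = s then f (xs t) else if t = r then g (xs t) else 1)"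
    by (simp only: split)
  also have "\<dots> = (\<Prod>t\<in>UNIV. if t = s then \<Sum>x\<in>UNIV. mu$x * f x else if t = r then \<Sum>y\<in>UNIV. mu$y * g y else 1)"
    unfolding iid_mean_prod[of mu "\<lambda>t z. if t = s then f z else if t = r then g z else 1"]
    by (rule prod.cong) (simp_all add: assms)
  finally show ?thesis by (simp only: split)
qed

lemma iid_mean_pair:
  fixes mu :: "real^'n::finite" and F :: "'n \<Rightarrow> 'n \<Rightarrow> real" and s r :: "'t::finite"
  assumes mu_sum: "(\<Sum>i\<in>UNIV. mu$i) = 1"
  shows "iid_mean mu (\<lambda>xs. F (xs s) (xs r))
       = (if s = r then \<Sum>x\<in>UNIV. mu$x * F x x else \<Sum>x\<in>UNIV. \<Sum>y\<in>UNIV. mu$x * mu$y * F x y)"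
proof (cases "s = r")
  case True
  then show ?thesis by (simp add: iid_mean_coordinate[OF mu_sum, of "\<lambda>x. F x x"])
next
  case False
  have "F (xs s) (xs r) = (\<Sum>y\<in>UNIV. F (xs s) y * of_bool (xs r = y))" for xs :: "'t \<Rightarrow> 'n"
    unfolding of_bool_def by (simp add: if_distrib[of "\<lambda>c. _ * c"] cong: if_cong)
  then have "iid_mean mu (\<lambda>xs. F (xs s) (xs r)) = iid_mean mu (\<lambda>xs. \<Sum>y\<in>UNIV. F (xs s) y * of_bool (xs r = y))"
    by simp
  also have "\<dots> = (\<Sum>y\<in>UNIV. (\<Sum>x\<in>UNIV. mu$x * F x y) * (\<Sum>z\<in>UNIV. mu$z * of_bool (z = y)))"
    unfolding iid_mean_sum
    by (intro sum.cong refl iid_mean_two_coordinates[OF mu_sum False, of "\<lambda>z. F z _" "\<lambda>z. of_bool (z = _)"])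
  also have "\<dots> = (\<Sum>y\<in>UNIV. (\<Sum>x\<in>UNIV. mu$x * F x y) * mu$y)"
    by simp
  also have "\<dots> = (\<Sum>x\<in>UNIV. \<Sum>y\<in>UNIV. mu$x * mu$y * F x y)"
    by (subst sum.swap) (simp add: sum_distrib_left sum_distrib_right mult_ac)
  finally show ?thesis using False by simp
qed

lemma iid_mean_bilinear:
  fixes mu :: "real^'n::finite" and F :: "'n \<Rightarrow> 'n \<Rightarrow> real" and a b :: "'t::finite \<Rightarrow> real"
  assumes mu_sum: "(\<Sum>i\<in>UNIV. mu$i) = 1"
  defines "m \<equiv> \<Sum>x\<in>UNIV. \<Sum>y\<in>UNIV. mu$x * mu$y * F x y"
    and "d \<equiv> \<Sum>x\<in>UNIV. mu$x * F x x"
  shows "iid_mean mu (\<lambda>xs. \<Sum>s\<in>UNIV. \<Sum>r\<in>UNIV. a s * b r * F (xs s) (xs r))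
       = sum a UNIV * sum b UNIV * m + (\<Sum>s\<in>UNIV. a s * b s) * (d - m)"
proof -
  have "iid_mean mu (\<lambda>xs. \<Sum>s\<in>UNIV. \<Sum>r\<in>UNIV. a s * b r * F (xs s) (xs r))
      = (\<Sum>s\<in>UNIV. \<Sum>r\<in>UNIV. a s * b r * m + (if s = r then a s * b s * (d - m) else 0))"
    unfolding iid_mean_sum
  proof (intro sum.cong refl)
    fix s r
    show "iid_mean mu (\<lambda>xs. a s * b r * F (xs s) (xs r))
        = a s * b r * m + (if s = r then a s * b s * (d - m) else 0)"
      unfolding iid_mean_mult_left iid_mean_pair[OF mu_sum] m_def[symmetric] d_def[symmetric]
      by (simp add: algebra_simps)
  qed
  also have "\<dots> = sum a UNIV * sum b UNIV * m + (\<Sum>s\<in>UNIV. a s * b s) * (d - m)"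
    unfolding sum.distrib sum_product unfolding sum_distrib_right by simp
  finally show ?thesis .
qed

lemma Xmat_mult_component: "(Xmat xs *v u) $ l = (\<Sum>s\<in>UNIV. u$s * of_bool (xs s = l))"
  unfolding Xmat_def matrix_vector_mult_def of_bool_def by (simp add: mult.commute)

lemma matrix_Xmat_mult_component: "(M *v (Xmat xs *v u)) $ i = (\<Sum>s\<in>UNIV. u$s * M$i$(xs s))"
proof -
  have "(M *v (Xmat xs *v u)) $ i = (\<Sum>l\<in>UNIV. \<Sum>s\<in>UNIV. M$i$l * (u$s * of_bool (xs s = l)))"
    unfolding matrix_vector_mult_def[of M] vec_lambda_beta Xmat_mult_component sum_distrib_left ..
  also have "\<dots> = (\<Sum>s\<in>UNIV. u$s * M$i$(xs s))"
    by (subst sum.swap) (simp add: of_bool_def if_distrib[of "\<lambda>c. _ * c"] mult.commute cong: if_cong)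
  finally show ?thesis .
qed

lemma transpose_Xmat_mult_component: "(transpose (Xmat xs) *v z) $ t = z $ (xs t)"
  by (simp add: transpose_def Xmat_def matrix_vector_mult_def if_distrib[of "\<lambda>c. c * _"] cong: if_cong)

lemma iid_mean_outer_Xmat:
  fixes mu :: "real^'n::finite" and M :: "real^'n^'n" and u w :: "real^'t::finite"
  assumes mu_sum: "(\<Sum>i\<in>UNIV. mu$i) = 1"
  shows "iid_mean mu (\<lambda>xs. outer (M *v (Xmat xs *v u)) (Xmat xs *v w))
       = ((\<Sum>s\<in>UNIV. u$s) * (\<Sum>s\<in>UNIV. w$s)) *\<^sub>R outer (M *v mu) mu
         + (u \<bullet> w) *\<^sub>R (M ** diag_vec mu - outer (M *v mu) mu)"
proof -
  have "iid_mean mu (\<lambda>xs. outer (M *v (Xmat xs *v u)) (Xmat xs *v w)) $ i $ j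
      = (\<Sum>s\<in>UNIV. u$s) * (\<Sum>s\<in>UNIV. w$s) * ((M *v mu)$i * mu$j)
        + (u \<bullet> w) * (M$i$j * mu$j - (M *v mu)$i * mu$j)" for i j
  proof -
    have "outer (M *v (Xmat xs *v u)) (Xmat xs *v w) $ i $ j
        = (\<Sum>s\<in>UNIV. \<Sum>r\<in>UNIV. u$s * w$r * (M$i$(xs s) * of_bool (xs r = j)))" for xs :: "'t \<Rightarrow> 'n"
      unfolding outer_def vec_lambda_beta matrix_Xmat_mult_component Xmat_mult_component sum_product
      by (simp only: mult_ac)
    then have "iid_mean mu (\<lambda>xs. outer (M *v (Xmat xs *v u)) (Xmat xs *v w)) $ i $ j
        = iid_mean mu (\<lambda>xs. \<Sum>s\<in>UNIV. \<Sum>r\<in>UNIV. u$s * w$r * (M$i$(xs s) * of_bool (xs r = j)))"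
      by (simp only: iid_mean_component)
    also have "\<dots> = (\<Sum>s\<in>UNIV. u$s) * (\<Sum>s\<in>UNIV. w$s) * ((M *v mu)$i * mu$j)
        + (u \<bullet> w) * (mu$j * M$i$j - (M *v mu)$i * mu$j)"
    proof -
      have "(\<Sum>x\<in>UNIV. mu$x * (M$i$x * of_bool (x = j))) = mu$j * M$i$j"
        by (simp add: of_bool_def if_distrib[of "\<lambda>c. _ * c"] cong: if_cong)
      moreover have "(\<Sum>x\<in>UNIV. \<Sum>y\<in>UNIV. mu$x * mu$y * (M$i$x * of_bool (y = j))) = (M *v mu)$i * mu$j"
        by (simp add: of_bool_def if_distrib[of "\<lambda>c. _ * c"] matrix_vector_mult_def sum_distrib_left
            sum_distrib_right mult_ac cong: if_cong)
      ultimately show ?thesis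
        unfolding iid_mean_bilinear[OF mu_sum, of "\<lambda>s. u$s" "\<lambda>r. w$r" "\<lambda>x y. M$i$x * of_bool (y = j)"]
        by (simp add: inner_vec_def)
    qed
    finally show ?thesis by (simp add: mult.commute)
  qed
  then show ?thesis
    by (simp add: vec_eq_iff outer_def matrix_mult_diag_vec_component algebra_simps)
qed

lemma iid_mean_gram_Xmat:
  fixes mu :: "real^'n::finite" and B :: "real^'n^'n" and u :: "real^'t::finite"
  assumes mu_sum: "(\<Sum>i\<in>UNIV. mu$i) = 1"
  shows "iid_mean mu (\<lambda>xs. transpose (Xmat xs) *v (B *v (Xmat xs *v u)))
       = ((\<Sum>s\<in>UNIV. u$s) * (mu \<bullet> (B *v mu))) *\<^sub>R 1
         + ((\<Sum>x\<in>UNIV. mu$x * B$x$x) - mu \<bullet> (B *v mu)) *\<^sub>R u"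
proof -
  define m where "m = mu \<bullet> (B *v mu)"
  define d where "d = (\<Sum>x\<in>UNIV. mu$x * B$x$x)"
  have m_sum: "m = (\<Sum>x\<in>UNIV. \<Sum>y\<in>UNIV. mu$x * mu$y * B$x$y)"
    by (simp add: m_def inner_vec_def matrix_vector_mult_def sum_distrib_left mult_ac)
  have "iid_mean mu (\<lambda>xs. transpose (Xmat xs) *v (B *v (Xmat xs *v u))) $ t
      = (\<Sum>s\<in>UNIV. u$s) * m + (d - m) * u$t" for t
  proof -
    have "iid_mean mu (\<lambda>xs. transpose (Xmat xs) *v (B *v (Xmat xs *v u))) $ t
        = (\<Sum>r\<in>UNIV. u$r * iid_mean mu (\<lambda>xs. B$(xs t)$(xs r)))"
      by (simp only: iid_mean_component transpose_Xmat_mult_component matrix_Xmat_mult_component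
          iid_mean_sum iid_mean_mult_left)
    also have "\<dots> = (\<Sum>r\<in>UNIV. u$r * m + (if r = t then (d - m) * u$t else 0))"
      by (intro sum.cong refl) (simp add: iid_mean_pair[OF mu_sum, of "\<lambda>x y. B$x$y"] m_sum d_def algebra_simps)
    also have "\<dots> = (\<Sum>s\<in>UNIV. u$s) * m + (d - m) * u$t"
      by (simp add: sum.distrib sum_distrib_right)
    finally show ?thesis .
  qed
  then show ?thesis by (simp add: vec_eq_iff m_def d_def)
qed


section \<open>Gradients of the loss\<close>

lemma grad_eqI:
  assumes "(f has_derivative (\<lambda>h. g \<bullet> h)) (at x)"
  shows "grad f x = g"
  unfolding grad_def
proof (rule the_equality)
  fix g' assume "(f has_derivative (\<lambda>h. g' \<bullet> h)) (at x)"
  then have "(\<lambda>h. g' \<bullet> h) = (\<lambda>h. g \<bullet> h)"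
    using has_derivative_unique assms by blast
  then have "(g' - g) \<bullet> (g' - g) = 0"
    by (metis inner_diff_left diff_self)
  then show "g' = g" by simp
qed (rule assms)

lemma has_derivative_half_sq_residual:
  fixes L :: "'a::real_normed_vector \<Rightarrow> 'b::real_inner"
  assumes L: "bounded_linear L"
  shows "((\<lambda>x. 1/2 * (norm (e - L x))^2) has_derivative (\<lambda>h. (L x - e) \<bullet> L h)) (at x)"
proof -
  have eq: "(\<lambda>x. 1/2 * (norm (e - L x))^2) = (\<lambda>x. 1/2 * ((e - L x) \<bullet> (e - L x)))"
    by (simp add: power2_norm_eq_inner)
  show ?thesis
    unfolding eq
    by (rule derivative_eq_intros bounded_linear.has_derivative[OF L] | simp)+
      (simp add: fun_eq_iff inner_diff_right inner_commute)
qed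

lemma grad_loss_V:
  "grad (\<lambda>V'. loss V' A xs k xo) V
     = outer (V *v (Xmat xs *v column k A) - axis xo 1) (Xmat xs *v column k A)"
proof (rule grad_eqI)
  define y where "y = Xmat xs *v column k A"
  have "((\<lambda>V'. loss V' A xs k xo) has_derivative (\<lambda>H. (V *v y - axis xo 1) \<bullet> (H *v y))) (at V)"
    unfolding loss_def y_def[symmetric]
    by (rule has_derivative_half_sq_residual[OF bounded_linear_matrix_vector_mult_left])
  then show "((\<lambda>V'. loss V' A xs k xo) has_derivative (\<lambda>H. outer (V *v y - axis xo 1) y \<bullet> H)) (at V)"
    by (simp only: inner_matrix_vector_mult)
qed

lemma column_upd_col: "column k (upd_col A j a) = (if k = j then a else column k A)"
  by (auto simp: column_def upd_col_def vec_eq_iff)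

lemma grad_loss_A:
  "grad (\<lambda>a. loss V (upd_col A j a) xs k xo) (column j A)
     = (if j = k then transpose (Xmat xs) *v (transpose V *v (V *v (Xmat xs *v column j A) - axis xo 1))
        else 0)"
proof (cases "j = k")
  case True
  define r where "r = V *v (Xmat xs *v column j A) - axis xo 1"
  have "bounded_linear (\<lambda>a. V *v (Xmat xs *v a))"
    by (rule bounded_linear_compose[OF matrix_vector_mul_bounded_linear matrix_vector_mul_bounded_linear])
  from has_derivative_half_sq_residual[OF this, of "axis xo 1" "column j A"]
  have "((\<lambda>a. loss V (upd_col A j a) xs k xo) has_derivative (\<lambda>h. r \<bullet> (V *v (Xmat xs *v h)))) (at (column j A))"
    unfolding loss_def column_upd_col r_def using True by simp
  moreover have "r \<bullet> (V *v (Xmat xs *v h)) = (transpose (Xmat xs) *v (transpose V *v r)) \<bullet> h" for h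
    by (simp add: dot_lmul_matrix[symmetric] vector_matrix_mul_assoc matrix_vector_mul_assoc)
  ultimately show ?thesis
    using True r_def grad_eqI by simp
next
  case False
  then have "(\<lambda>a. loss V (upd_col A j a) xs k xo) = (\<lambda>a. loss V A xs k xo)"
    by (simp add: loss_def column_upd_col)
  moreover have "grad (\<lambda>a. loss V A xs k xo) (column j A) = 0"
    by (rule grad_eqI) simp
  ultimately show ?thesis
    using False by simp
qed


section \<open>Expected gradients\<close>

lemma sum_scaleR_linear_residual:
  assumes "linear L" and "sum w S = 1"
  shows "(\<Sum>x\<in>S. w x *\<^sub>R L (c - e x)) = L (c - (\<Sum>x\<in>S. w x *\<^sub>R e x))"
proof -
  have "(\<Sum>x\<in>S. w x *\<^sub>R L (c - e x)) = L (\<Sum>x\<in>S. w x *\<^sub>R (c - e x))"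
    by (simp add: linear_sum[OF assms(1)] linear_scale[OF assms(1)])
  also have "\<dots> = L (c - (\<Sum>x\<in>S. w x *\<^sub>R e x))"
    by (simp add: scaleR_diff_right sum_subtractf scaleR_sum_left[symmetric] assms(2))
  finally show ?thesis .
qed

(* Pr(x_o = xo | x_1, ..., x_T = xs, x_{T+1} = k) *)
definition output_prob :: "real^'n^'n \<Rightarrow> real^'n^'t \<Rightarrow> ('t::finite \<Rightarrow> 'n::finite) \<Rightarrow> 'n \<Rightarrow> 'n \<Rightarrow> real" where
  "output_prob P Q xs k xo = (\<Sum>t\<in>UNIV. Q$t$k * P$xo$(xs t))"

lemma output_prob_sum:
  assumes "\<forall>j. (\<Sum>i\<in>UNIV. P$i$j) = 1" and "\<forall>k. (\<Sum>t\<in>UNIV. Q$t$k) = 1"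
  shows "(\<Sum>xo\<in>UNIV. output_prob P Q xs k xo) = 1"
  unfolding output_prob_def using assms
  by (subst sum.swap) (simp add: sum_distrib_left[symmetric])

lemma output_prob_mean:
  "(\<Sum>xo\<in>UNIV. output_prob P Q xs k xo *\<^sub>R axis xo 1) = P *v (Xmat xs *v column k Q)"
  by (simp add: vec_eq_iff output_prob_def matrix_Xmat_mult_component column_def axis_def
      if_distrib[of "\<lambda>c. _ * c"] cong: if_cong)

lemma expect_eq_iid_mean:
  "expect mu P Q f = (\<Sum>k\<in>UNIV. mu$k *\<^sub>R iid_mean mu (\<lambda>xs. \<Sum>xo\<in>UNIV. output_prob P Q xs k xo *\<^sub>R f xs k xo))"
  unfolding expect_def iid_mean_def output_prob_def scaleR_sum_right scaleR_scaleR
  by (subst sum.swap) (simp add: mult_ac)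

lemma expect_linear:
  assumes "linear L"
  shows "expect mu P Q (\<lambda>xs k xo. L (f xs k xo)) = L (expect mu P Q f)"
  unfolding expect_def by (simp add: linear_sum[OF assms] linear_scale[OF assms])

lemma expect_component: "expect mu P Q f $ i = expect mu P Q (\<lambda>xs k xo. f xs k xo $ i)"
  by (simp add: expect_def)

lemma expect_if_query_eq:
  "expect mu P Q (\<lambda>xs k xo. if j = k then f xs xo else 0)
     = mu$j *\<^sub>R iid_mean mu (\<lambda>xs. \<Sum>xo\<in>UNIV. output_prob P Q xs j xo *\<^sub>R f xs xo)"
proof -
  have "mu$k *\<^sub>R iid_mean mu (\<lambda>xs. \<Sum>xo\<in>UNIV. output_prob P Q xs k xo *\<^sub>R (if j = k then f xs xo else 0))
      = (if k = j then mu$j *\<^sub>R iid_mean mu (\<lambda>xs. \<Sum>xo\<in>UNIV. output_prob P Q xs j xo *\<^sub>R f xs xo) else 0)" for k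
    by (cases "k = j") (simp_all add: iid_mean_def)
  then show ?thesis
    by (simp add: expect_eq_iid_mean)
qed

lemma expect_grad_loss_V:
  fixes mu :: "real^'n::finite" and P V :: "real^'n^'n" and Q A :: "real^'n^'t::finite"
  assumes mu_sum: "(\<Sum>i\<in>UNIV. mu$i) = 1"
    and P_col: "\<forall>j. (\<Sum>i\<in>UNIV. P$i$j) = 1" and P_mu: "P *v mu = mu"
    and Q_col: "\<forall>k. (\<Sum>t\<in>UNIV. Q$t$k) = 1" and A_col: "\<forall>k. (\<Sum>t\<in>UNIV. A$t$k) = 1"
    and V_mu: "V *v mu = mu"
  shows "expect mu P Q (\<lambda>xs k xo. grad (\<lambda>V'. loss V' A xs k xo) V)
       = (mu_norm2 mu A *\<^sub>R (V - mu_ones mu) - mu_inner mu A Q *\<^sub>R (P - mu_ones mu)) ** diag_vec mu"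
proof -
  have diag: "M ** diag_vec mu - outer mu mu = (M - mu_ones mu) ** diag_vec mu" for M :: "real^'n^'n"
    by (simp add: vec_eq_iff matrix_mult_diag_vec_component outer_def mu_ones_def algebra_simps)
  have cond: "(\<Sum>xo\<in>UNIV. output_prob P Q xs k xo *\<^sub>R grad (\<lambda>V'. loss V' A xs k xo) V)
      = outer (V *v (Xmat xs *v column k A)) (Xmat xs *v column k A)
        - outer (P *v (Xmat xs *v column k Q)) (Xmat xs *v column k A)" for xs k
    using sum_scaleR_linear_residual[OF linear_outer_left output_prob_sum[OF P_col Q_col, of xs k],
        where c = "V *v (Xmat xs *v column k A)" and e = "\<lambda>xo. axis xo 1"]
    by (simp add: grad_loss_V output_prob_mean linear_diff[OF linear_outer_left])
  have "iid_mean mu (\<lambda>xs. \<Sum>xo\<in>UNIV. output_prob P Q xs k xo *\<^sub>R grad (\<lambda>V'. loss V' A xs k xo) V)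
      = (column k A \<bullet> column k A) *\<^sub>R ((V - mu_ones mu) ** diag_vec mu)
        - (column k A \<bullet> column k Q) *\<^sub>R ((P - mu_ones mu) ** diag_vec mu)" for k
    using A_col Q_col
    by (simp add: cond iid_mean_diff iid_mean_outer_Xmat[OF mu_sum] column_def V_mu P_mu diag inner_commute)
  then have "expect mu P Q (\<lambda>xs k xo. grad (\<lambda>V'. loss V' A xs k xo) V)
      = mu_norm2 mu A *\<^sub>R ((V - mu_ones mu) ** diag_vec mu) - mu_inner mu A Q *\<^sub>R ((P - mu_ones mu) ** diag_vec mu)"
    by (simp add: expect_eq_iid_mean mu_norm2_def mu_inner_columns scaleR_diff_right sum_subtractf scaleR_sum_left)
  then show ?thesis
    by (simp only: matrix_diff_rdistrib[of "_ *\<^sub>R _"] scalar_matrix_assoc)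
qed

lemma expect_grad_loss_A:
  fixes mu :: "real^'n::finite" and P V :: "real^'n^'n" and Q A :: "real^'n^'t::finite"
  assumes mu_sum: "(\<Sum>i\<in>UNIV. mu$i) = 1"
    and P_col: "\<forall>j. (\<Sum>i\<in>UNIV. P$i$j) = 1" and P_mu: "P *v mu = mu"
    and Q_col: "\<forall>k. (\<Sum>t\<in>UNIV. Q$t$k) = 1" and A_col: "\<forall>k. (\<Sum>t\<in>UNIV. A$t$k) = 1"
    and V_mu: "V *v mu = mu"
  shows "expect mu P Q (\<lambda>xs k xo. grad (\<lambda>a. loss V (upd_col A j a) xs k xo) (column j A))
       = mu$j *\<^sub>R ((mu_norm2 mu V - (norm mu)^2) *\<^sub>R column j A - (mu_inner mu V P - (norm mu)^2) *\<^sub>R column j Q)"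
proof -
  have cond: "(\<Sum>xo\<in>UNIV. output_prob P Q xs j xo *\<^sub>R
          (transpose (Xmat xs) *v (transpose V *v (V *v (Xmat xs *v column j A) - axis xo 1))))
      = transpose (Xmat xs) *v ((transpose V ** V) *v (Xmat xs *v column j A))
        - transpose (Xmat xs) *v ((transpose V ** P) *v (Xmat xs *v column j Q))" for xs
    using sum_scaleR_linear_residual[OF matrix_vector_mul_linear[of "transpose (Xmat xs) ** transpose V"]
        output_prob_sum[OF P_col Q_col, of xs j], where c = "V *v (Xmat xs *v column j A)" and e = "\<lambda>xo. axis xo 1"]
    by (simp only: output_prob_mean matrix_vector_mul_assoc matrix_mul_assoc matrix_vector_mult_diff_distrib)
  have VV: "mu \<bullet> ((transpose V ** V) *v mu) = (norm mu)^2" and VP: "mu \<bullet> ((transpose V ** P) *v mu) = (norm mu)^2"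
    by (simp_all only: matrix_vector_mul_assoc[symmetric] inner_transpose_matrix_vector_mult V_mu P_mu
        power2_norm_eq_inner)
  have sums: "(\<Sum>s\<in>UNIV. column j A $ s) = 1" "(\<Sum>s\<in>UNIV. column j Q $ s) = 1"
    using A_col Q_col by (simp_all add: column_def)
  have "expect mu P Q (\<lambda>xs k xo. grad (\<lambda>a. loss V (upd_col A j a) xs k xo) (column j A))
      = mu$j *\<^sub>R (iid_mean mu (\<lambda>xs. transpose (Xmat xs) *v ((transpose V ** V) *v (Xmat xs *v column j A)))
          - iid_mean mu (\<lambda>xs. transpose (Xmat xs) *v ((transpose V ** P) *v (Xmat xs *v column j Q))))"
    by (simp only: grad_loss_A expect_if_query_eq cond iid_mean_diff)
  then show ?thesis
    unfolding iid_mean_gram_Xmat[OF mu_sum] VV VP sums mu_inner_transpose_mult_diag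
    by (simp add: mu_norm2_def algebra_simps)
qed

lemma expect_pgrad_V:
  fixes mu :: "real^'n::finite" and P V :: "real^'n^'n" and Q A :: "real^'n^'t::finite"
  assumes mu_pos: "\<forall>i. mu$i > 0" and mu_sum: "(\<Sum>i\<in>UNIV. mu$i) = 1"
    and P_col: "\<forall>j. (\<Sum>i\<in>UNIV. P$i$j) = 1" and P_mu: "P *v mu = mu"
    and Q_col: "\<forall>k. (\<Sum>t\<in>UNIV. Q$t$k) = 1" and A_col: "\<forall>k. (\<Sum>t\<in>UNIV. A$t$k) = 1"
    and V_col: "\<forall>j. (\<Sum>i\<in>UNIV. V$i$j) = 1" and V_mu: "V *v mu = mu"
  shows "expect mu P Q (pgrad_V mu V A) = mu_norm2 mu A *\<^sub>R (V - mu_ones mu) - mu_inner mu A Q *\<^sub>R (P - mu_ones mu)"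
proof -
  define Y where "Y = mu_norm2 mu A *\<^sub>R (V - mu_ones mu) - mu_inner mu A Q *\<^sub>R (P - mu_ones mu)"
  define C :: "real^'n^'n" where "C = mat 1 - const_mat (1 / real CARD('n))"
  define R :: "real^'n^'n" where "R = mat 1 - (1 / (norm mu)^2) *\<^sub>R outer mu mu"
  have Y_mu: "Y *v mu = 0"
    by (simp add: Y_def algebra_simps scaleR_matrix_vector_assoc[symmetric] mu_ones_mult_vec mu_sum V_mu P_mu)
  have Y_col: "\<forall>j. (\<Sum>i\<in>UNIV. Y$i$j) = 0"
    by (simp add: Y_def mu_ones_def right_diff_distrib sum_subtractf sum_distrib_left[symmetric] V_col P_col mu_sum)
  have "pgrad_V mu V A = (\<lambda>xs k xo. C ** grad (\<lambda>V'. loss V' A xs k xo) V ** (diag_vec (\<chi> i. 1 / mu$i) ** R))"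
    by (simp add: fun_eq_iff pgrad_V_def C_def R_def matrix_mul_assoc)
  then have "expect mu P Q (pgrad_V mu V A) = C ** (Y ** diag_vec mu) ** (diag_vec (\<chi> i. 1 / mu$i) ** R)"
    by (simp only: expect_linear[OF linear_matrix_sandwich[of C "diag_vec (\<chi> i. 1 / mu$i) ** R"]]
        expect_grad_loss_V[OF mu_sum P_col P_mu Q_col A_col V_mu] Y_def)
  also have "\<dots> = C ** Y ** ((diag_vec mu ** diag_vec (\<chi> i. 1 / mu$i)) ** R)"
    by (simp add: matrix_mul_assoc)
  also have "\<dots> = Y"
    using mu_pos
    by (simp add: diag_vec_mult_inverse less_imp_neq[symmetric] C_def R_def centering_matrix_mult[OF Y_col]
        matrix_mult_rank_one_update[OF Y_mu])
  finally show ?thesis unfolding Y_def .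
qed

lemma expect_pgrad_A:
  fixes mu :: "real^'n::finite" and P V :: "real^'n^'n" and Q A :: "real^'n^'t::finite"
  assumes mu_pos: "\<forall>i. mu$i > 0" and mu_sum: "(\<Sum>i\<in>UNIV. mu$i) = 1"
    and P_col: "\<forall>j. (\<Sum>i\<in>UNIV. P$i$j) = 1" and P_mu: "P *v mu = mu"
    and Q_col: "\<forall>k. (\<Sum>t\<in>UNIV. Q$t$k) = 1" and A_col: "\<forall>k. (\<Sum>t\<in>UNIV. A$t$k) = 1"
    and V_mu: "V *v mu = mu"
  shows "expect mu P Q (pgrad_A mu V A)
       = (mu_norm2 mu V - (norm mu)^2) *\<^sub>R (A - const_mat (1 / real CARD('t)))
         - (mu_inner mu V P - (norm mu)^2) *\<^sub>R (Q - const_mat (1 / real CARD('t)))"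
proof -
  define T where "T = real CARD('t)"
  have T_pos: "T > 0"
    by (simp add: T_def)
  define c1 where "c1 = mu_norm2 mu V - (norm mu)^2"
  define c2 where "c2 = mu_inner mu V P - (norm mu)^2"
  have "expect mu P Q (pgrad_A mu V A) $ t $ j = c1 * (A$t$j - 1 / T) - c2 * (Q$t$j - 1 / T)" for t j
  proof -
    define L where "L g = (1 / mu$j) * (((mat 1 - const_mat (1 / T) :: real^'t^'t) *v g) $ t)" for g
    have "linear L"
      unfolding L_def by (rule linearI) (simp_all add: matrix_vector_right_distrib matrix_vector_mult_scaleR algebra_simps)
    have col_sum: "(\<Sum>i\<in>UNIV. (mu$j *\<^sub>R (c1 *\<^sub>R column j A - c2 *\<^sub>R column j Q)) $ i) = mu$j * (c1 - c2)"
      using A_col Q_col by (simp add: column_def algebra_simps sum_subtractf sum_distrib_left[symmetric])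
    have "expect mu P Q (pgrad_A mu V A) $ t $ j
        = expect mu P Q (\<lambda>xs k xo. L (grad (\<lambda>a. loss V (upd_col A j a) xs k xo) (column j A)))"
      by (simp add: expect_component pgrad_A_def L_def T_def)
    also have "\<dots> = L (mu$j *\<^sub>R (c1 *\<^sub>R column j A - c2 *\<^sub>R column j Q))"
      unfolding expect_linear[OF \<open>linear L\<close>] expect_grad_loss_A[OF mu_sum P_col P_mu Q_col A_col V_mu] c1_def c2_def ..
    also have "\<dots> = c1 * (A$t$j - 1 / T) - c2 * (Q$t$j - 1 / T)"
      using mu_pos[rule_format, of j] T_pos
      unfolding L_def centering_matrix_mult_vec col_sum by (simp add: column_def field_simps)
    finally show ?thesis .
  qed
  then show ?thesis
    by (simp add: vec_eq_iff const_mat_def c1_def c2_def T_def)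
qed

theorem lemmaC4:
  fixes mu :: "real^'n::finite" and P V :: "real^'n^'n" and Q A :: "real^'n^'t::finite"
  assumes mu_pos: "\<forall>i. mu$i > 0" and mu_sum: "(\<Sum>i\<in>UNIV. mu$i) = 1"
    and P_nonneg: "\<forall>i j. P$i$j \<ge> 0" and P_col: "\<forall>j. (\<Sum>i\<in>UNIV. P$i$j) = 1"
    and P_mu: "P *v mu = mu"
    and Q_nonneg: "\<forall>t k. Q$t$k \<ge> 0" and Q_col: "\<forall>k. (\<Sum>t\<in>UNIV. Q$t$k) = 1"
    and KP_pos: "mu_norm2 mu P - (norm mu)^2 > 0"
    and KQ_pos: "mu_norm2 mu Q - 1 / real CARD('t) > 0"
    and V_col: "\<forall>j. (\<Sum>i\<in>UNIV. V$i$j) = 1"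
    and A_col: "\<forall>k. (\<Sum>t\<in>UNIV. A$t$k) = 1"
    and V_mu: "V *v mu = mu"
  shows "let T = real CARD('t);
             KP = mu_norm2 mu P - (norm mu)^2;
             KQ = mu_norm2 mu Q - 1 / T;
             aV = (mu_inner mu V P - (norm mu)^2) / KP;
             aA = (mu_inner mu A Q - 1 / T) / KQ;
             DV = V - aV *\<^sub>R P - (1 - aV) *\<^sub>R mu_ones mu;
             DA = A - aA *\<^sub>R Q - (1 - aA) *\<^sub>R const_mat (1 / T)
         in expect mu P Q (pgrad_A mu V A)
              = (KP * aV * (aV * aA - 1)) *\<^sub>R (Q - const_mat (1 / T))
                + (KP * aV^2) *\<^sub>R DA + mu_norm2 mu DV *\<^sub>R (A - const_mat (1 / T))
          \<and> expect mu P Q (pgrad_V mu V A)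
              = (aA * KQ * (aA * aV - 1)) *\<^sub>R (P - mu_ones mu)
                + ((aV - 1) / T) *\<^sub>R (P - mu_ones mu)
                + (aA^2 * KQ + 1 / T) *\<^sub>R DV + mu_norm2 mu DA *\<^sub>R (V - mu_ones mu)"
proof -
  define T where "T = real CARD('t)"
  define V0 where "V0 = V - mu_ones mu"
  define P0 where "P0 = P - mu_ones mu"
  define A0 where "A0 = A - const_mat (1 / T)"
  define Q0 where "Q0 = Q - const_mat (1 / T)"
  define KP where "KP = mu_norm2 mu P0"
  define KQ where "KQ = mu_norm2 mu Q0"
  define aV where "aV = mu_inner mu V0 P0 / KP"
  define aA where "aA = mu_inner mu A0 Q0 / KQ"
  have centered: "mu_norm2 mu V - (norm mu)^2 = mu_norm2 mu V0" "mu_inner mu V P - (norm mu)^2 = mu_inner mu V0 P0"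
      "mu_norm2 mu P - (norm mu)^2 = KP" "mu_norm2 mu A - 1 / T = mu_norm2 mu A0"
      "mu_inner mu A Q - 1 / T = mu_inner mu A0 Q0" "mu_norm2 mu Q - 1 / T = KQ"
    by (simp_all add: mu_norm2_def V0_def P0_def A0_def Q0_def KP_def KQ_def T_def
        mu_inner_centered_mu_ones[OF mu_sum] mu_inner_centered_const_mat[OF mu_sum] assms)
  have DV: "V - aV *\<^sub>R P - (1 - aV) *\<^sub>R mu_ones mu = V0 - aV *\<^sub>R P0"
    and DA: "A - aA *\<^sub>R Q - (1 - aA) *\<^sub>R const_mat (1 / T) = A0 - aA *\<^sub>R Q0"
    by (simp_all add: V0_def P0_def A0_def Q0_def algebra_simps)
  have VP: "mu_inner mu V0 P0 = KP * aV" and AQ: "mu_inner mu A0 Q0 = KQ * aA"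
    using KP_pos KQ_pos centered by (simp_all add: aV_def aA_def T_def)
  then have norm_DV: "mu_norm2 mu (V0 - aV *\<^sub>R P0) = mu_norm2 mu V0 - aV^2 * KP"
    and norm_DA: "mu_norm2 mu (A0 - aA *\<^sub>R Q0) = mu_norm2 mu A0 - aA^2 * KQ"
    by (simp_all add: mu_norm2_diff_scaleR KP_def KQ_def power2_eq_square)
  have EA: "expect mu P Q (pgrad_A mu V A) = mu_norm2 mu V0 *\<^sub>R A0 - (KP * aV) *\<^sub>R Q0"
    using expect_pgrad_A[OF mu_pos mu_sum P_col P_mu Q_col A_col V_mu] centered VP
    by (simp add: A0_def Q0_def T_def)
  have EV: "expect mu P Q (pgrad_V mu V A) = (mu_norm2 mu A0 + 1 / T) *\<^sub>R V0 - (KQ * aA + 1 / T) *\<^sub>R P0"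
  proof -
    have "mu_norm2 mu A = mu_norm2 mu A0 + 1 / T" "mu_inner mu A Q = KQ * aA + 1 / T"
      using centered(4,5) AQ by simp_all
    then show ?thesis
      using expect_pgrad_V[OF mu_pos mu_sum P_col P_mu Q_col A_col V_col V_mu] by (simp add: V0_def P0_def)
  qed
  show ?thesis
    unfolding Let_def T_def[symmetric] centered aV_def[symmetric] aA_def[symmetric] DV DA EA EV norm_DV norm_DA
      A0_def[symmetric] Q0_def[symmetric] P0_def[symmetric] V0_def[symmetric]
    by (simp add: algebra_simps power2_eq_square diff_divide_distrib)
qed

end
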